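(* Let $G\cong(\mathbb{C}^* )^N$ be an algebraic torus, $V,W$ finite-dimensional rational representations of $G$ with Hermitian norms, $v\in V\setminus\{0\}$, $w\in W\setminus\{0\}$, and $p_{w,v}(\sigma)=\log\frac{\|\sigma w\|^2}{\|w\|^2}-\log\frac{\|\sigma v\|^2}{\|v\|^2}$. Then there exists a sequence $\{\sigma_j\}\subset G$ with $p_{w,v}(\sigma_j)\to-\infty$ if and only if there exists an algebraic one-parameter subgroup $\lambda:\mathbb{C}^*\to G$ with $\lim_{|t|\to0}p_{w,v}(\lambda(t))=-\infty$. *)

theory Defs
  imports "HOL-Analysis.Analysis"
begin

text \<open>The algebraic torus G = (C^*)^N, with N = CARD('n), realised as the set of
  vectors in complex^'n with all coordinates nonzero, with coordinatewise product.\<close>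

definition torus :: "(complex^'n) set" where
  "torus = {\<sigma>. \<forall>k. \<sigma> $ k \<noteq> 0}"

definition tmul :: "complex^'n \<Rightarrow> complex^'n \<Rightarrow> complex^'n" where
  "tmul \<sigma> \<tau> = (\<chi> k. \<sigma> $ k * \<tau> $ k)"

definition tone :: "complex^'n" where
  "tone = (\<chi> k. 1)"

definition lmono :: "complex^'n \<Rightarrow> ('n \<Rightarrow> int) \<Rightarrow> complex" where
  "lmono \<sigma> \<alpha> = (\<Prod>k\<in>UNIV. \<sigma> $ k powi \<alpha> k)"

definition regular_on_torus :: "(complex^'n \<Rightarrow> complex) \<Rightarrow> bool" where
  "regular_on_torus f \<longleftrightarrow> (\<exists>S c. finite S \<and>
     (\<forall>\<sigma>\<in>torus. f \<sigma> = (\<Sum>\<alpha>\<in>S. c \<alpha> * lmono \<sigma> \<alpha>)))"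

definition rational_rep :: "(complex^'n \<Rightarrow> complex^'v^'v) \<Rightarrow> bool" where
  "rational_rep \<rho> \<longleftrightarrow>
     \<rho> tone = mat 1 \<and>
     (\<forall>\<sigma>\<in>torus. \<forall>\<tau>\<in>torus. \<rho> (tmul \<sigma> \<tau>) = \<rho> \<sigma> ** \<rho> \<tau>) \<and>
     (\<forall>i j. regular_on_torus (\<lambda>\<sigma>. \<rho> \<sigma> $ i $ j))"

definition herm_form :: "complex^'v^'v \<Rightarrow> complex^'v \<Rightarrow> complex^'v \<Rightarrow> complex" where
  "herm_form H x y = (\<Sum>i\<in>UNIV. \<Sum>j\<in>UNIV. cnj (x $ i) * H $ i $ j * y $ j)"

definition hermitian_pd :: "complex^'v^'v \<Rightarrow> bool" where
  "hermitian_pd H \<longleftrightarrow> (\<forall>i j. H $ i $ j = cnj (H $ j $ i)) \<and>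
     (\<forall>x. x \<noteq> 0 \<longrightarrow> Re (herm_form H x x) > 0)"

definition hnorm2 :: "complex^'v^'v \<Rightarrow> complex^'v \<Rightarrow> real" where
  "hnorm2 H x = Re (herm_form H x x)"

definition alg_1ps :: "(complex \<Rightarrow> complex^'n) \<Rightarrow> bool" where
  "alg_1ps lam \<longleftrightarrow>
     (\<forall>t. t \<noteq> 0 \<longrightarrow> lam t \<in> torus) \<and>
     (\<forall>s t. s \<noteq> 0 \<longrightarrow> t \<noteq> 0 \<longrightarrow> lam (s * t) = tmul (lam s) (lam t)) \<and>
     (\<forall>k. \<exists>S c. finite S \<and> (\<forall>t. t \<noteq> 0 \<longrightarrow> lam t $ k = (\<Sum>m\<in>S. c m * t powi m)))"

definition pwv ::
  "(complex^'n \<Rightarrow> complex^'w^'w) \<Rightarrow> complex^'w^'w \<Rightarrow> complex^'w \<Rightarrow>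
   (complex^'n \<Rightarrow> complex^'v^'v) \<Rightarrow> complex^'v^'v \<Rightarrow> complex^'v \<Rightarrow> complex^'n \<Rightarrow> real" where
  "pwv \<rho>W HW w \<rho>V HV v \<sigma> =
     ln (hnorm2 HW (\<rho>W \<sigma> *v w) / hnorm2 HW w) - ln (hnorm2 HV (\<rho>V \<sigma> *v v) / hnorm2 HV v)"

end

theory Submission
  imports Defs
begin

text \<open>
  The proof compares orbit norms with weights.  A rational representation decomposes
  every orbit map as sigma v = sum over weights alpha of sigma^alpha u_alpha.  Averaging
  over a finite subgroup of roots of unity isolates each weight component, which yields
  |sigma^alpha|^2 <= D ||sigma v||^2; the triangle and Cauchy--Schwarz inequalities give
  ||sigma v||^2 <= E sum_alpha |sigma^alpha|^2.  We call such a function weight-controlled.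

  For weight-controlled h_V, h_W the log-ratio ln h_W - ln h_V is bounded below as soon as
  every weight of V is dominated by a weight of W at every point.  So an unbounded-below
  sequence produces a point sigma where a weight alpha of V strictly dominates all weights
  of W; these are strict linear inequalities in x = -ln|sigma|, which survive rounding a
  large multiple of x to an integral covector d.  Along t |-> t^d the log-ratio is then
  at most C + 2 ln|t|, hence tends to minus infinity.  The converse is immediate, and the
  theorem is the instance h = normalized squared orbit norm, for which p_{w,v} is exactly
  the log-ratio.
\<close>

section \<open>Hermitian norms are equivalent to the Euclidean norm\<close>

lemma hnorm2_scaleR: "hnorm2 H (r *\<^sub>R x) = r\<^sup>2 * hnorm2 H x"
proof -
  have "herm_form H (r *\<^sub>R x) (r *\<^sub>R x) = of_real (r\<^sup>2) * herm_form H x x"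
    unfolding herm_form_def vector_scaleR_component
    by (simp add: sum_distrib_left scaleR_conv_of_real power2_eq_square algebra_simps)
  thus ?thesis unfolding hnorm2_def by simp
qed

lemma hnorm2_continuous: "continuous_on S (hnorm2 H)"
  unfolding hnorm2_def herm_form_def by (intro continuous_intros)

text \<open>By compactness of the unit sphere and homogeneity, a positive definite Hermitian
  form is squeezed between two positive multiples of the squared Euclidean norm.\<close>

lemma hnorm2_equiv_norm:
  assumes "hermitian_pd H"
  shows "\<exists>c C. 0 < c \<and> 0 < C \<and> (\<forall>x. c * (norm x)\<^sup>2 \<le> hnorm2 H x \<and> hnorm2 H x \<le> C * (norm x)\<^sup>2)"
proof -
  let ?S = "sphere (0::complex^'v) 1"
  have cpt: "compact ?S" by simp
  have ne: "?S \<noteq> {}" using vector_choose_size[of 1] by auto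
  obtain y where y: "y \<in> ?S" and ymin: "\<And>x. x \<in> ?S \<Longrightarrow> hnorm2 H y \<le> hnorm2 H x"
    using continuous_attains_inf[OF cpt ne hnorm2_continuous] by blast
  obtain z where z: "z \<in> ?S" and zmax: "\<And>x. x \<in> ?S \<Longrightarrow> hnorm2 H x \<le> hnorm2 H z"
    using continuous_attains_sup[OF cpt ne hnorm2_continuous] by blast
  have pos: "0 < hnorm2 H x" if "x \<noteq> 0" for x
    using assms that unfolding hermitian_pd_def hnorm2_def by auto
  have "hnorm2 H y * (norm x)\<^sup>2 \<le> hnorm2 H x \<and> hnorm2 H x \<le> hnorm2 H z * (norm x)\<^sup>2" for x
  proof (cases "x = 0")
    case True
    then show ?thesis by (simp add: hnorm2_def herm_form_def)
  next
    case False
    define x' where "x' = (1 / norm x) *\<^sub>R x"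
    have x': "x' \<in> ?S" using False by (simp add: x'_def)
    have "x = norm x *\<^sub>R x'" using False by (simp add: x'_def)
    hence "hnorm2 H x = (norm x)\<^sup>2 * hnorm2 H x'" by (metis hnorm2_scaleR)
    with ymin[OF x'] zmax[OF x'] show ?thesis
      by (simp add: mult.commute mult_right_mono)
  qed
  moreover have "0 < hnorm2 H y" "0 < hnorm2 H z" using y z by (auto intro!: pos)
  ultimately show ?thesis by blast
qed

section \<open>Weight decomposition of an orbit\<close>

text \<open>Since the matrix entries of a rational representation are Laurent polynomials, every
  orbit map is a finite sum of characters times fixed vectors (the weight components of v).\<close>

lemma weight_decomposition:
  fixes \<rho> :: "complex^'n \<Rightarrow> complex^'v^'v"
  assumes "rational_rep \<rho>"
  shows "\<exists>S u. finite S \<and> (\<forall>\<alpha>\<in>S. u \<alpha> \<noteq> 0) \<and>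
           (\<forall>\<sigma>\<in>torus. \<rho> \<sigma> *v v = (\<Sum>\<alpha>\<in>S. lmono \<sigma> \<alpha> *s u \<alpha>))"
proof -
  have "\<forall>i j. \<exists>S c. finite S \<and> (\<forall>\<sigma>\<in>torus. \<rho> \<sigma> $ i $ j = (\<Sum>\<alpha>\<in>S. c \<alpha> * lmono \<sigma> \<alpha>))"
    using assms unfolding rational_rep_def regular_on_torus_def by blast
  then obtain SS cc where SS: "\<And>i j. finite (SS i j)"
    and cc: "\<And>i j \<sigma>. \<sigma> \<in> torus \<Longrightarrow> \<rho> \<sigma> $ i $ j = (\<Sum>\<alpha>\<in>SS i j. cc i j \<alpha> * lmono \<sigma> \<alpha>)"
    by metis
  define S0 where "S0 = (\<Union>i. \<Union>j. SS i j)"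
  have finS0: "finite S0" unfolding S0_def using SS by auto
  define c where "c i j \<alpha> = (if \<alpha> \<in> SS i j then cc i j \<alpha> else 0)" for i j \<alpha>
  define u where "u \<alpha> = (\<chi> i. \<Sum>l\<in>UNIV. c i l \<alpha> * v $ l)" for \<alpha>
  have entry: "\<rho> \<sigma> $ i $ l = (\<Sum>\<alpha>\<in>S0. c i l \<alpha> * lmono \<sigma> \<alpha>)" if "\<sigma> \<in> torus" for \<sigma> i l
  proof -
    have "SS i l \<subseteq> S0" unfolding S0_def by blast
    with cc[OF that] show ?thesis
      unfolding c_def by (simp add: if_distrib[of "\<lambda>x. x * _"] sum.If_cases finS0 Int_absorb1)
  qed
  have expand0: "\<rho> \<sigma> *v v = (\<Sum>\<alpha>\<in>S0. lmono \<sigma> \<alpha> *s u \<alpha>)" if "\<sigma> \<in> torus" for \<sigma>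
    unfolding vec_eq_iff
  proof
    fix i
    have "(\<rho> \<sigma> *v v) $ i = (\<Sum>l\<in>UNIV. (\<Sum>\<alpha>\<in>S0. c i l \<alpha> * lmono \<sigma> \<alpha>) * v $ l)"
      by (simp add: matrix_vector_mult_def entry[OF that])
    also have "\<dots> = (\<Sum>\<alpha>\<in>S0. lmono \<sigma> \<alpha> * u \<alpha> $ i)"
      unfolding u_def by (simp add: sum_distrib_right sum_distrib_left algebra_simps sum.swap[of _ UNIV S0])
    finally show "(\<rho> \<sigma> *v v) $ i = (\<Sum>\<alpha>\<in>S0. lmono \<sigma> \<alpha> *s u \<alpha>) $ i" by simp
  qed
  define S where "S = {\<alpha>\<in>S0. u \<alpha> \<noteq> 0}"
  have "\<rho> \<sigma> *v v = (\<Sum>\<alpha>\<in>S. lmono \<sigma> \<alpha> *s u \<alpha>)" if "\<sigma> \<in> torus" for \<sigma>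
    unfolding expand0[OF that] S_def using finS0 by (intro sum.mono_neutral_right) auto
  moreover have "finite S" using finS0 by (simp add: S_def)
  ultimately show ?thesis unfolding S_def by blast
qed

section \<open>Characters of the finite subgroup of M-th roots of unity\<close>

definition unity_root :: "nat \<Rightarrow> nat \<Rightarrow> complex" where
  "unity_root M i = exp (2 * of_real pi * \<i> * of_nat i / of_nat M)"

lemma unity_root_sum:
  fixes n :: int
  assumes M: "0 < M" and n: "\<bar>n\<bar> < int M"
  shows "(\<Sum>i<M. unity_root M i powi n) = (if n = 0 then of_nat M else 0)"
proof (cases "n = 0")
  case True
  then show ?thesis by simp
next
  case False
  define q where "q = exp (2 * of_real pi * \<i> * of_int n / of_nat M)"
  have powers: "unity_root M i powi n = q ^ i" for i
  proof -
    have "unity_root M i powi n = exp (of_int n * (2 * of_real pi * \<i> * of_nat i / of_nat M))"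
      unfolding unity_root_def by (rule exp_power_int)
    also have "\<dots> = exp (of_nat i * (2 * of_real pi * \<i> * of_int n / of_nat M))"
      by (simp add: algebra_simps)
    also have "\<dots> = q ^ i" unfolding q_def by (rule exp_of_nat_mult)
    finally show ?thesis .
  qed
  have "q \<noteq> 1"
  proof
    assume "q = 1"
    then obtain k :: int where "Im (2 * of_real pi * \<i> * of_int n / of_nat M) = of_int (2 * k) * pi"
      unfolding q_def exp_eq_1 by blast
    hence "real_of_int n = real M * real_of_int k" using M by (simp add: field_simps)
    hence nk: "n = int M * k" by (metis of_int_eq_iff of_int_mult of_int_of_nat_eq)
    with False have "1 \<le> \<bar>k\<bar>" by auto
    hence "int M \<le> \<bar>n\<bar>" unfolding nk abs_mult using M by (simp add: mult_le_cancel_left1)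
    with n show False by simp
  qed
  moreover have "q ^ M = 1"
  proof -
    have "q ^ M = exp (of_nat M * (2 * of_real pi * \<i> * of_int n / of_nat M))"
      unfolding q_def by (rule exp_of_nat_mult[symmetric])
    also have "\<dots> = exp (2 * of_real pi * \<i> * of_int n)" using M by simp
    also have "\<dots> = 1" unfolding exp_eq_1 by simp
    finally show ?thesis .
  qed
  ultimately show ?thesis using False geometric_sum[of q M] by (simp add: powers)
qed

definition unity_point :: "nat \<Rightarrow> ('n \<Rightarrow> nat) \<Rightarrow> complex^'n" where
  "unity_point M j = (\<chi> k. unity_root M (j k))"

lemma unity_point_torus: "unity_point M j \<in> torus"
  by (simp add: unity_point_def torus_def unity_root_def)

lemma norm_lmono_unity_point: "norm (lmono (unity_point M j) \<alpha>) = 1"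
  by (simp add: lmono_def unity_point_def unity_root_def prod_norm[symmetric] norm_power_int)

lemma unity_point_orthogonality:
  fixes \<alpha> \<beta> :: "'n::finite \<Rightarrow> int"
  assumes M: "0 < M" and close: "\<And>k. \<bar>\<beta> k - \<alpha> k\<bar> < int M"
  shows "(\<Sum>j\<in>PiE UNIV (\<lambda>_. {..<M}). lmono (unity_point M j) \<beta> * lmono (unity_point M j) (-\<alpha>))
         = (if \<beta> = \<alpha> then of_nat M ^ CARD('n) else 0)"
proof -
  have "(\<Sum>j\<in>PiE UNIV (\<lambda>_. {..<M}). lmono (unity_point M j) \<beta> * lmono (unity_point M j) (-\<alpha>))
      = (\<Sum>j\<in>PiE UNIV (\<lambda>_. {..<M}). \<Prod>k\<in>UNIV. unity_root M (j k) powi (\<beta> k - \<alpha> k))"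
    unfolding lmono_def unity_point_def prod.distrib[symmetric]
    by (intro sum.cong prod.cong refl) (simp add: power_int_add[symmetric] unity_root_def)
  also have "\<dots> = (\<Prod>k\<in>UNIV. \<Sum>i<M. unity_root M i powi (\<beta> k - \<alpha> k))"
    by (rule prod_sum_PiE[symmetric]) auto
  also have "\<dots> = (\<Prod>k\<in>UNIV. if \<beta> k = \<alpha> k then of_nat M else 0)"
    using unity_root_sum[OF M close] by simp
  also have "\<dots> = (if \<beta> = \<alpha> then of_nat M ^ CARD('n) else 0)"
    by (auto simp: fun_eq_iff)
  finally show ?thesis .
qed

lemma lmono_tmul: "lmono (tmul \<sigma> \<tau>) \<beta> = lmono \<sigma> \<beta> * lmono \<tau> \<beta>"
  unfolding lmono_def tmul_def by (simp add: power_int_mult_distrib prod.distrib)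

lemma tmul_torus: "\<sigma> \<in> torus \<Longrightarrow> \<tau> \<in> torus \<Longrightarrow> tmul \<sigma> \<tau> \<in> torus"
  unfolding torus_def tmul_def by simp

lemma separating_order:
  fixes S :: "('n::finite \<Rightarrow> int) set"
  assumes "finite S"
  shows "\<exists>M>0. \<forall>\<alpha>\<in>S. \<forall>\<beta>\<in>S. \<forall>k. \<bar>\<beta> k - \<alpha> k\<bar> < int M"
proof -
  define M where "M = Suc (\<Sum>\<alpha>\<in>S. \<Sum>\<beta>\<in>S. \<Sum>k\<in>UNIV. nat \<bar>\<beta> k - \<alpha> k\<bar>)"
  have "\<bar>\<beta> k - \<alpha> k\<bar> < int M" if "\<alpha> \<in> S" "\<beta> \<in> S" for \<alpha> \<beta> k
  proof -
    have "nat \<bar>\<beta> k - \<alpha> k\<bar> \<le> (\<Sum>k\<in>UNIV. nat \<bar>\<beta> k - \<alpha> k\<bar>)"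
      by (rule member_le_sum) auto
    also have "\<dots> \<le> (\<Sum>\<beta>\<in>S. \<Sum>k\<in>UNIV. nat \<bar>\<beta> k - \<alpha> k\<bar>)"
      using that assms by (intro member_le_sum) auto
    also have "\<dots> \<le> (\<Sum>\<alpha>\<in>S. \<Sum>\<beta>\<in>S. \<Sum>k\<in>UNIV. nat \<bar>\<beta> k - \<alpha> k\<bar>)"
      using that assms by (intro member_le_sum[where f="\<lambda>\<alpha>. \<Sum>\<beta>\<in>S. \<Sum>k\<in>UNIV. nat \<bar>\<beta> k - \<alpha> k\<bar>"]) auto
    finally have "nat \<bar>\<beta> k - \<alpha> k\<bar> < M" unfolding M_def by simp
    thus ?thesis by linarith
  qed
  thus ?thesis unfolding M_def by blast
qed

text \<open>Fourier inversion on the finite subgroup: averaging the translates of a finite sum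
  of characters against the conjugate character of alpha isolates its alpha-component.\<close>

lemma weight_extraction:
  fixes F :: "complex^'n::finite \<Rightarrow> complex^'v"
  assumes finS: "finite S" and M: "0 < M"
    and close: "\<forall>\<alpha>\<in>S. \<forall>\<beta>\<in>S. \<forall>k. \<bar>\<beta> k - \<alpha> k\<bar> < int M"
    and F: "\<And>\<sigma>. \<sigma> \<in> torus \<Longrightarrow> F \<sigma> = (\<Sum>\<beta>\<in>S. lmono \<sigma> \<beta> *s u \<beta>)"
    and \<sigma>: "\<sigma> \<in> torus" and \<alpha>: "\<alpha> \<in> S"
  shows "(\<Sum>j\<in>PiE UNIV (\<lambda>_. {..<M}). lmono (unity_point M j) (-\<alpha>) *s F (tmul (unity_point M j) \<sigma>))
         = (of_nat M ^ CARD('n) * lmono \<sigma> \<alpha>) *s u \<alpha>"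
  unfolding vec_eq_iff
proof
  fix i
  let ?J = "PiE (UNIV::'n set) (\<lambda>_. {..<M})" and ?\<zeta> = "unity_point M"
  have "(\<Sum>j\<in>?J. lmono (?\<zeta> j) (-\<alpha>) *s F (tmul (?\<zeta> j) \<sigma>)) $ i
      = (\<Sum>j\<in>?J. \<Sum>\<beta>\<in>S. (lmono (?\<zeta> j) \<beta> * lmono (?\<zeta> j) (-\<alpha>)) * (lmono \<sigma> \<beta> * u \<beta> $ i))"
    unfolding sum_component by (intro sum.cong refl)
       (simp add: F[OF tmul_torus[OF unity_point_torus \<sigma>]] lmono_tmul sum_distrib_left algebra_simps)
  also have "\<dots> = (\<Sum>\<beta>\<in>S. (\<Sum>j\<in>?J. lmono (?\<zeta> j) \<beta> * lmono (?\<zeta> j) (-\<alpha>)) * (lmono \<sigma> \<beta> * u \<beta> $ i))"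
    by (simp add: sum.swap[of _ ?J S] sum_distrib_right)
  also have "\<dots> = (\<Sum>\<beta>\<in>S. if \<beta> = \<alpha> then of_nat M ^ CARD('n) * (lmono \<sigma> \<beta> * u \<beta> $ i) else 0)"
  proof (rule sum.cong[OF refl])
    fix \<beta> assume \<beta>: "\<beta> \<in> S"
    have "\<bar>\<beta> k - \<alpha> k\<bar> < int M" for k using close \<alpha> \<beta> by blast
    then have "(\<Sum>j\<in>?J. lmono (?\<zeta> j) \<beta> * lmono (?\<zeta> j) (-\<alpha>))
        = (if \<beta> = \<alpha> then of_nat M ^ CARD('n) else 0)"
      by (rule unity_point_orthogonality[OF M])
    then show "(\<Sum>j\<in>?J. lmono (?\<zeta> j) \<beta> * lmono (?\<zeta> j) (-\<alpha>)) * (lmono \<sigma> \<beta> * u \<beta> $ i)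
        = (if \<beta> = \<alpha> then of_nat M ^ CARD('n) * (lmono \<sigma> \<beta> * u \<beta> $ i) else 0)"
      by simp
  qed
  also have "\<dots> = ((of_nat M ^ CARD('n) * lmono \<sigma> \<alpha>) *s u \<alpha>) $ i"
    using \<alpha> finS by (simp add: sum.delta)
  finally show "(\<Sum>j\<in>?J. lmono (?\<zeta> j) (-\<alpha>) *s F (tmul (?\<zeta> j) \<sigma>)) $ i
      = ((of_nat M ^ CARD('n) * lmono \<sigma> \<alpha>) *s u \<alpha>) $ i" .
qed

section \<open>Two-sided comparison of orbit norms with weight sums\<close>

lemma norm_vector_smult: "norm (c *s (x::complex^'v)) = norm c * norm x"
  unfolding norm_vec_def by (simp add: norm_mult L2_set_right_distrib)

text \<open>Each weight component of an orbit is controlled by the orbit norm, uniformly on the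
  torus: extract it by averaging over a finite subgroup of roots of unity, and bound each
  translate using the operator norms of the finitely many matrices of that subgroup.\<close>

lemma weight_component_bound:
  fixes \<rho> :: "complex^'n \<Rightarrow> complex^'v^'v"
  assumes rep: "rational_rep \<rho>" and finS: "finite S"
    and expand: "\<And>\<sigma>. \<sigma> \<in> torus \<Longrightarrow> \<rho> \<sigma> *v v = (\<Sum>\<alpha>\<in>S. lmono \<sigma> \<alpha> *s u \<alpha>)"
  shows "\<exists>K>0. \<forall>\<sigma>\<in>torus. \<forall>\<alpha>\<in>S. norm (lmono \<sigma> \<alpha>) * norm (u \<alpha>) \<le> K * norm (\<rho> \<sigma> *v v)"
proof -
  obtain M where M: "0 < M" and close: "\<forall>\<alpha>\<in>S. \<forall>\<beta>\<in>S. \<forall>k. \<bar>\<beta> k - \<alpha> k\<bar> < int M"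
    using separating_order[OF finS] by blast
  define J where "J = PiE (UNIV::'n set) (\<lambda>_. {..<M})"
  have finJ: "finite J" and neJ: "J \<noteq> {}"
    using M by (auto simp: J_def finite_PiE PiE_eq_empty_iff)
  have "\<forall>j. \<exists>B>0. \<forall>x. norm (\<rho> (unity_point M j) *v x) \<le> norm x * B"
    using bounded_linear.pos_bounded[OF matrix_vector_mul_bounded_linear] by blast
  then obtain B where B: "\<And>j. 0 < B j" and bound: "\<And>j x. norm (\<rho> (unity_point M j) *v x) \<le> norm x * B j"
    by metis
  define K where "K = (\<Sum>j\<in>J. B j) / real M ^ CARD('n)"
  have "0 < K" unfolding K_def using B finJ neJ M by (simp add: sum_pos)
  moreover have "norm (lmono \<sigma> \<alpha>) * norm (u \<alpha>) \<le> K * norm (\<rho> \<sigma> *v v)"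
    if \<sigma>: "\<sigma> \<in> torus" and \<alpha>: "\<alpha> \<in> S" for \<sigma> \<alpha>
  proof -
    have translate: "\<rho> (tmul (unity_point M j) \<sigma>) *v v = \<rho> (unity_point M j) *v (\<rho> \<sigma> *v v)" for j
    proof -
      have "\<rho> (tmul (unity_point M j) \<sigma>) = \<rho> (unity_point M j) ** \<rho> \<sigma>"
        using rep unity_point_torus \<sigma> unfolding rational_rep_def by blast
      thus ?thesis by (simp add: matrix_vector_mul_assoc)
    qed
    have "real M ^ CARD('n) * (norm (lmono \<sigma> \<alpha>) * norm (u \<alpha>))
        = norm ((of_nat M ^ CARD('n) * lmono \<sigma> \<alpha>) *s u \<alpha>)"
      by (simp add: norm_vector_smult norm_mult norm_power)
    also have "\<dots> = norm (\<Sum>j\<in>J. lmono (unity_point M j) (-\<alpha>) *s (\<rho> (tmul (unity_point M j) \<sigma>) *v v))"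
      unfolding J_def using weight_extraction[OF finS M close expand \<sigma> \<alpha>] by simp
    also have "\<dots> \<le> (\<Sum>j\<in>J. norm (\<rho> (unity_point M j) *v (\<rho> \<sigma> *v v)))"
      by (rule order.trans[OF norm_sum])
         (simp add: norm_vector_smult norm_lmono_unity_point translate)
    also have "\<dots> \<le> (\<Sum>j\<in>J. norm (\<rho> \<sigma> *v v) * B j)"
      by (intro sum_mono bound)
    also have "\<dots> = (\<Sum>j\<in>J. B j) * norm (\<rho> \<sigma> *v v)"
      by (simp add: sum_distrib_right mult.commute)
    also have "\<dots> = real M ^ CARD('n) * (K * norm (\<rho> \<sigma> *v v))"
      unfolding K_def using M by simp
    finally show ?thesis using M by simp
  qed
  ultimately show ?thesis by blast
qed

text \<open>Conversely, a finite sum of characters times fixed vectors is bounded by the sum of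
  the squared moduli of the characters (triangle inequality plus Cauchy--Schwarz).\<close>

lemma norm_le_weight_sum:
  fixes x :: "complex^'n \<Rightarrow> complex^'v"
  assumes finS: "finite S" and neS: "S \<noteq> {}" and nz: "\<And>\<alpha>. \<alpha> \<in> S \<Longrightarrow> u \<alpha> \<noteq> 0"
    and expand: "\<And>\<sigma>. \<sigma> \<in> torus \<Longrightarrow> x \<sigma> = (\<Sum>\<alpha>\<in>S. lmono \<sigma> \<alpha> *s u \<alpha>)"
  shows "\<exists>E>0. \<forall>\<sigma>\<in>torus. (norm (x \<sigma>))\<^sup>2 \<le> E * (\<Sum>\<alpha>\<in>S. (norm (lmono \<sigma> \<alpha>))\<^sup>2)"
proof -
  define U where "U = (\<Sum>\<alpha>\<in>S. norm (u \<alpha>))"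
  have U: "0 < U" unfolding U_def using finS neS nz by (intro sum_pos) auto
  have "(norm (x \<sigma>))\<^sup>2 \<le> (U\<^sup>2 * card S) * (\<Sum>\<alpha>\<in>S. (norm (lmono \<sigma> \<alpha>))\<^sup>2)" if \<sigma>: "\<sigma> \<in> torus" for \<sigma>
  proof -
    have "norm (x \<sigma>) \<le> (\<Sum>\<alpha>\<in>S. norm (lmono \<sigma> \<alpha>) * norm (u \<alpha>))"
      unfolding expand[OF \<sigma>] by (rule order.trans[OF norm_sum]) (simp add: norm_vector_smult)
    also have "\<dots> \<le> (\<Sum>\<alpha>\<in>S. norm (lmono \<sigma> \<alpha>) * U)"
      unfolding U_def using finS by (intro sum_mono mult_left_mono member_le_sum) auto
    finally have "norm (x \<sigma>) \<le> U * (\<Sum>\<alpha>\<in>S. norm (lmono \<sigma> \<alpha>))"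
      by (simp add: sum_distrib_left mult.commute)
    hence "(norm (x \<sigma>))\<^sup>2 \<le> (U * (\<Sum>\<alpha>\<in>S. norm (lmono \<sigma> \<alpha>)))\<^sup>2"
      by (rule power_mono) simp
    also have "\<dots> = U\<^sup>2 * (\<Sum>\<alpha>\<in>S. norm (lmono \<sigma> \<alpha>))\<^sup>2"
      by (rule power_mult_distrib)
    also have "\<dots> \<le> U\<^sup>2 * ((\<Sum>\<alpha>\<in>S. (norm (lmono \<sigma> \<alpha>))\<^sup>2) * card S)"
      by (intro mult_left_mono sum_squared_le_sum_of_squares) auto
    finally show ?thesis by (simp add: algebra_simps)
  qed
  moreover have "0 < U\<^sup>2 * card S" using U finS neS by (simp add: card_gt_0_iff)
  ultimately show ?thesis by blast
qed

definition weight_controlled :: "(complex^'n \<Rightarrow> real) \<Rightarrow> ('n \<Rightarrow> int) set \<Rightarrow> bool" where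
  "weight_controlled h A \<longleftrightarrow> finite A \<and> A \<noteq> {} \<and>
     (\<exists>D>0. \<exists>E>0. \<forall>\<sigma>\<in>torus. (\<forall>\<alpha>\<in>A. (norm (lmono \<sigma> \<alpha>))\<^sup>2 \<le> D * h \<sigma>) \<and>
        h \<sigma> \<le> E * (\<Sum>\<alpha>\<in>A. (norm (lmono \<sigma> \<alpha>))\<^sup>2))"

lemma orbit_norm_weight_controlled:
  fixes \<rho> :: "complex^'n \<Rightarrow> complex^'v^'v"
  assumes rep: "rational_rep \<rho>" and H: "hermitian_pd H" and v: "v \<noteq> 0"
  shows "\<exists>A. weight_controlled (\<lambda>\<sigma>. hnorm2 H (\<rho> \<sigma> *v v) / hnorm2 H v) A"
proof -
  obtain S u where finS: "finite S" and nz: "\<And>\<alpha>. \<alpha> \<in> S \<Longrightarrow> u \<alpha> \<noteq> 0"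
    and expand: "\<And>\<sigma>. \<sigma> \<in> torus \<Longrightarrow> \<rho> \<sigma> *v v = (\<Sum>\<alpha>\<in>S. lmono \<sigma> \<alpha> *s u \<alpha>)"
    using weight_decomposition[OF rep, of v] by blast
  have neS: "S \<noteq> {}"
  proof
    assume "S = {}"
    moreover have "tone \<in> torus" by (simp add: tone_def torus_def)
    moreover have "\<rho> tone *v v = v" using rep unfolding rational_rep_def by simp
    ultimately show False using expand[of tone] v by simp
  qed
  obtain K where K: "0 < K"
    and Kb: "\<And>\<sigma> \<alpha>. \<sigma> \<in> torus \<Longrightarrow> \<alpha> \<in> S \<Longrightarrow> norm (lmono \<sigma> \<alpha>) * norm (u \<alpha>) \<le> K * norm (\<rho> \<sigma> *v v)"
    using weight_component_bound[OF rep finS expand] by blast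
  obtain E where E: "0 < E"
    and Eb: "\<And>\<sigma>. \<sigma> \<in> torus \<Longrightarrow> (norm (\<rho> \<sigma> *v v))\<^sup>2 \<le> E * (\<Sum>\<alpha>\<in>S. (norm (lmono \<sigma> \<alpha>))\<^sup>2)"
    using norm_le_weight_sum[OF finS neS nz expand] by blast
  obtain c C where c: "0 < c" and C: "0 < C"
    and cC: "\<And>x. c * (norm x)\<^sup>2 \<le> hnorm2 H x \<and> hnorm2 H x \<le> C * (norm x)\<^sup>2"
    using hnorm2_equiv_norm[OF H] by blast
  define hv where "hv = hnorm2 H v"
  have hv: "0 < hv" using H v unfolding hv_def hermitian_pd_def hnorm2_def by blast
  define m where "m = Min (norm ` u ` S)"
  have m: "0 < m" unfolding m_def using finS neS nz by (subst Min_gr_iff) auto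
  have mle: "m \<le> norm (u \<alpha>)" if "\<alpha> \<in> S" for \<alpha> unfolding m_def using finS that by simp
  define D where "D = K\<^sup>2 * hv / (c * m\<^sup>2)"
  define E' where "E' = C * E / hv"
  have lower: "(norm (lmono \<sigma> \<alpha>))\<^sup>2 \<le> D * (hnorm2 H (\<rho> \<sigma> *v v) / hv)"
    if \<sigma>: "\<sigma> \<in> torus" and \<alpha>: "\<alpha> \<in> S" for \<sigma> \<alpha>
  proof -
    have "norm (lmono \<sigma> \<alpha>) * m \<le> K * norm (\<rho> \<sigma> *v v)"
      using mult_left_mono[OF mle[OF \<alpha>], of "norm (lmono \<sigma> \<alpha>)"] Kb[OF \<sigma> \<alpha>] by simp
    hence "(norm (lmono \<sigma> \<alpha>) * m)\<^sup>2 \<le> (K * norm (\<rho> \<sigma> *v v))\<^sup>2"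
      by (rule power_mono) (use m in simp)
    hence "(norm (lmono \<sigma> \<alpha>))\<^sup>2 * m\<^sup>2 \<le> K\<^sup>2 * (norm (\<rho> \<sigma> *v v))\<^sup>2"
      by (simp add: power_mult_distrib)
    also have "\<dots> \<le> K\<^sup>2 * (hnorm2 H (\<rho> \<sigma> *v v) / c)"
      using cC c by (intro mult_left_mono) (auto simp: field_simps)
    finally show ?thesis unfolding D_def using m c hv by (simp add: field_simps)
  qed
  have upper: "hnorm2 H (\<rho> \<sigma> *v v) / hv \<le> E' * (\<Sum>\<alpha>\<in>S. (norm (lmono \<sigma> \<alpha>))\<^sup>2)"
    if \<sigma>: "\<sigma> \<in> torus" for \<sigma>
  proof -
    have "hnorm2 H (\<rho> \<sigma> *v v) \<le> C * (norm (\<rho> \<sigma> *v v))\<^sup>2" using cC by blast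
    also have "\<dots> \<le> C * (E * (\<Sum>\<alpha>\<in>S. (norm (lmono \<sigma> \<alpha>))\<^sup>2))"
      using Eb[OF \<sigma>] C by (intro mult_left_mono) auto
    finally show ?thesis unfolding E'_def using hv by (simp add: field_simps)
  qed
  have "0 < D" "0 < E'" unfolding D_def E'_def using K hv c m C E by simp_all
  hence "weight_controlled (\<lambda>\<sigma>. hnorm2 H (\<rho> \<sigma> *v v) / hv) S"
    unfolding weight_controlled_def using finS neS lower upper by blast
  thus ?thesis unfolding hv_def by blast
qed

section \<open>Domination of weights and lower bounds\<close>

text \<open>The modulus of a character is the exponential of a linear form in the log-moduli of
  the coordinates; this linearizes every comparison of characters.\<close>

lemma norm_lmono_exp:
  assumes "\<sigma> \<in> torus"
  shows "norm (lmono \<sigma> \<gamma>) = exp (\<Sum>k\<in>UNIV. of_int (\<gamma> k) * ln (norm (\<sigma> $ k)))"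
proof -
  have "norm (lmono \<sigma> \<gamma>) = (\<Prod>k\<in>UNIV. norm (\<sigma> $ k) powi \<gamma> k)"
    unfolding lmono_def by (simp add: prod_norm[symmetric] norm_power_int)
  also have "\<dots> = (\<Prod>k\<in>UNIV. exp (of_int (\<gamma> k) * ln (norm (\<sigma> $ k))))"
  proof (intro prod.cong refl)
    fix k
    have "0 < norm (\<sigma> $ k)" using assms by (simp add: torus_def)
    hence "norm (\<sigma> $ k) powi \<gamma> k = exp (ln (norm (\<sigma> $ k))) powi \<gamma> k" by simp
    also have "\<dots> = exp (of_int (\<gamma> k) * ln (norm (\<sigma> $ k)))" by (rule exp_power_int)
    finally show "norm (\<sigma> $ k) powi \<gamma> k = exp (of_int (\<gamma> k) * ln (norm (\<sigma> $ k)))" .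
  qed
  also have "\<dots> = exp (\<Sum>k\<in>UNIV. of_int (\<gamma> k) * ln (norm (\<sigma> $ k)))"
    by (simp add: exp_sum)
  finally show ?thesis .
qed

lemma weight_controlled_pos:
  assumes "weight_controlled h A" and "\<sigma> \<in> torus"
  shows "0 < h \<sigma>"
proof -
  obtain D \<alpha> where D: "0 < D" and \<alpha>: "\<alpha> \<in> A"
    and low: "(norm (lmono \<sigma> \<alpha>))\<^sup>2 \<le> D * h \<sigma>"
    using assms unfolding weight_controlled_def by blast
  have "0 < (norm (lmono \<sigma> \<alpha>))\<^sup>2" using norm_lmono_exp[OF assms(2)] by simp
  with low have "0 < D * h \<sigma>" by linarith
  with D show ?thesis by (simp add: zero_less_mult_iff)
qed

lemma log_ratio_bounded_below:
  assumes wV: "weight_controlled hV AV" and wW: "weight_controlled hW AW"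
    and dom: "\<And>\<sigma> \<alpha>. \<sigma> \<in> torus \<Longrightarrow> \<alpha> \<in> AV \<Longrightarrow> \<exists>\<beta>\<in>AW. norm (lmono \<sigma> \<alpha>) \<le> norm (lmono \<sigma> \<beta>)"
  shows "\<exists>L. \<forall>\<sigma>\<in>torus. L \<le> ln (hW \<sigma>) - ln (hV \<sigma>)"
proof -
  obtain EV where upV: "\<And>\<sigma>. \<sigma> \<in> torus \<Longrightarrow> hV \<sigma> \<le> EV * (\<Sum>\<alpha>\<in>AV. (norm (lmono \<sigma> \<alpha>))\<^sup>2)"
    and EV: "0 < EV"
    using wV unfolding weight_controlled_def by blast
  obtain DW where lowW: "\<And>\<sigma> \<beta>. \<sigma> \<in> torus \<Longrightarrow> \<beta> \<in> AW \<Longrightarrow> (norm (lmono \<sigma> \<beta>))\<^sup>2 \<le> DW * hW \<sigma>"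
    using wW unfolding weight_controlled_def by blast
  define B where "B = EV * card AV * DW"
  have "ln (hW \<sigma>) - ln (hV \<sigma>) \<ge> - ln B" if \<sigma>: "\<sigma> \<in> torus" for \<sigma>
  proof -
    have "hV \<sigma> \<le> EV * (\<Sum>\<alpha>\<in>AV. DW * hW \<sigma>)"
    proof (rule order.trans[OF upV[OF \<sigma>]], intro mult_left_mono sum_mono)
      fix \<alpha> assume "\<alpha> \<in> AV"
      then obtain \<beta> where \<beta>: "\<beta> \<in> AW" and le: "norm (lmono \<sigma> \<alpha>) \<le> norm (lmono \<sigma> \<beta>)"
        using dom[OF \<sigma>] by blast
      have "(norm (lmono \<sigma> \<alpha>))\<^sup>2 \<le> (norm (lmono \<sigma> \<beta>))\<^sup>2" using le by (intro power_mono) auto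
      also have "\<dots> \<le> DW * hW \<sigma>" by (rule lowW[OF \<sigma> \<beta>])
      finally show "(norm (lmono \<sigma> \<alpha>))\<^sup>2 \<le> DW * hW \<sigma>" .
    qed (use EV in simp)
    also have "\<dots> = B * hW \<sigma>" unfolding B_def by simp
    finally have le: "hV \<sigma> \<le> B * hW \<sigma>" .
    have pos: "0 < hV \<sigma>" "0 < hW \<sigma>" using weight_controlled_pos wV wW \<sigma> by blast+
    with le have "0 < B * hW \<sigma>" by linarith
    with pos have "0 < B" by (simp add: zero_less_mult_iff)
    have "ln (hV \<sigma>) \<le> ln (B * hW \<sigma>)" using le pos \<open>0 < B * hW \<sigma>\<close> by simp
    also have "\<dots> = ln B + ln (hW \<sigma>)" using \<open>0 < B\<close> pos by (simp add: ln_mult)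
    finally show ?thesis by simp
  qed
  thus ?thesis by blast
qed

lemma dominating_weight:
  assumes wV: "weight_controlled hV AV" and wW: "weight_controlled hW AW"
    and s: "\<And>j. s j \<in> torus"
    and lim: "filterlim (\<lambda>j. ln (hW (s j)) - ln (hV (s j))) at_bot sequentially"
  shows "\<exists>\<sigma>\<in>torus. \<exists>\<alpha>\<in>AV. \<forall>\<beta>\<in>AW. norm (lmono \<sigma> \<beta>) < norm (lmono \<sigma> \<alpha>)"
proof (rule ccontr)
  assume "\<not> ?thesis"
  hence "\<And>\<sigma> \<alpha>. \<sigma> \<in> torus \<Longrightarrow> \<alpha> \<in> AV \<Longrightarrow> \<exists>\<beta>\<in>AW. norm (lmono \<sigma> \<alpha>) \<le> norm (lmono \<sigma> \<beta>)"
    by (meson not_less)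
  then obtain L where L: "\<And>\<sigma>. \<sigma> \<in> torus \<Longrightarrow> L \<le> ln (hW \<sigma>) - ln (hV \<sigma>)"
    using log_ratio_bounded_below[OF wV wW] by blast
  have "eventually (\<lambda>j. ln (hW (s j)) - ln (hV (s j)) \<le> L - 1) sequentially"
    using lim unfolding filterlim_at_bot by blast
  then obtain j where "ln (hW (s j)) - ln (hV (s j)) \<le> L - 1"
    unfolding eventually_sequentially by blast
  with L[OF s[of j]] show False by linarith
qed

section \<open>Rational approximation of a separating direction\<close>

text \<open>The pairing of a character (weight) with a cocharacter, both given as integer vectors.\<close>

definition pairing :: "('n::finite \<Rightarrow> int) \<Rightarrow> ('n \<Rightarrow> int) \<Rightarrow> int" where
  "pairing \<gamma> d = (\<Sum>k\<in>UNIV. \<gamma> k * d k)"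

lemma floor_mult_bound:
  fixes g y f :: real
  assumes "y - 1 \<le> f" "f \<le> y"
  shows "g * y - \<bar>g\<bar> \<le> g * f"
proof (cases "0 \<le> g")
  case True
  hence "g * (y - 1) \<le> g * f" using assms by (intro mult_left_mono) auto
  thus ?thesis using True by (simp add: algebra_simps)
next
  case False
  hence "g * y \<le> g * f" using assms by (intro mult_left_mono_neg) auto
  thus ?thesis by simp
qed

text \<open>If a real covector x makes the linear form of a strictly smaller than those of
  finitely many exponent vectors beta, then a large integer multiple of x, rounded down,
  is an integral covector d separating them by at least 1.\<close>

lemma integral_separating_direction:
  fixes x :: "'n::finite \<Rightarrow> real"
  assumes finB: "finite B"
    and lt: "\<And>\<beta>. \<beta> \<in> B \<Longrightarrow> (\<Sum>k\<in>UNIV. of_int (a k) * x k) < (\<Sum>k\<in>UNIV. of_int (\<beta> k) * x k)"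
  shows "\<exists>d. \<forall>\<beta>\<in>B. pairing a d + 1 \<le> pairing \<beta> d"
proof (cases "B = {}")
  case True
  then show ?thesis by simp
next
  case False
  define lin where "lin \<beta> = (\<Sum>k\<in>UNIV. of_int (\<beta> k) * x k)" for \<beta> :: "'n \<Rightarrow> int"
  define \<delta> where "\<delta> = Min ((\<lambda>\<beta>. lin \<beta> - lin a) ` B)"
  have \<delta>: "0 < \<delta>" unfolding \<delta>_def using finB False lt by (subst Min_gr_iff) (auto simp: lin_def)
  have \<delta>le: "\<delta> \<le> lin \<beta> - lin a" if "\<beta> \<in> B" for \<beta> unfolding \<delta>_def using finB that by simp
  define R where "R = (\<Sum>\<beta>\<in>B. \<Sum>k\<in>UNIV. \<bar>real_of_int (\<beta> k - a k)\<bar>)"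
  define K where "K = real (nat \<lceil>R / \<delta>\<rceil> + 1)"
  have "R / \<delta> < K" unfolding K_def by linarith
  hence KR: "R < K * \<delta>" using \<delta> by (simp add: field_simps)
  define d where "d k = \<lfloor>K * x k\<rfloor>" for k
  have "pairing a d + 1 \<le> pairing \<beta> d" if \<beta>: "\<beta> \<in> B" for \<beta>
  proof -
    let ?g = "\<lambda>k. real_of_int (\<beta> k - a k)"
    have "K * (lin \<beta> - lin a) - (\<Sum>k\<in>UNIV. \<bar>?g k\<bar>) = (\<Sum>k\<in>UNIV. ?g k * (K * x k) - \<bar>?g k\<bar>)"
      unfolding lin_def by (simp add: sum_subtractf sum.distrib sum_distrib_left algebra_simps)
    also have "\<dots> \<le> (\<Sum>k\<in>UNIV. ?g k * real_of_int (d k))"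
      by (intro sum_mono floor_mult_bound) (auto simp: d_def)
    also have "\<dots> = real_of_int (pairing \<beta> d - pairing a d)"
      unfolding pairing_def by (simp add: sum_subtractf left_diff_distrib)
    finally have 1: "K * (lin \<beta> - lin a) - (\<Sum>k\<in>UNIV. \<bar>?g k\<bar>) \<le> real_of_int (pairing \<beta> d - pairing a d)" .
    have "(\<Sum>k\<in>UNIV. \<bar>?g k\<bar>) \<le> R"
      unfolding R_def using \<beta> finB by (intro member_le_sum[where f="\<lambda>\<beta>. \<Sum>k\<in>UNIV. \<bar>real_of_int (\<beta> k - a k)\<bar>"]) auto
    moreover have "K * \<delta> \<le> K * (lin \<beta> - lin a)" using \<delta>le[OF \<beta>] by (intro mult_left_mono) (auto simp: K_def)
    ultimately have "0 < real_of_int (pairing \<beta> d - pairing a d)" using 1 KR by linarith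
    thus ?thesis by linarith
  qed
  thus ?thesis by blast
qed

section \<open>One-parameter subgroups given by integral covectors\<close>

definition cochar :: "('n \<Rightarrow> int) \<Rightarrow> complex \<Rightarrow> complex^'n" where
  "cochar d t = (\<chi> k. t powi d k)"

lemma cochar_torus: "t \<noteq> 0 \<Longrightarrow> cochar d t \<in> torus"
  by (simp add: cochar_def torus_def)

lemma alg_1ps_cochar: "alg_1ps (cochar d)"
  unfolding alg_1ps_def
proof (intro conjI allI impI)
  show "cochar d t \<in> torus" if "t \<noteq> 0" for t by (rule cochar_torus[OF that])
  show "cochar d (s * t) = tmul (cochar d s) (cochar d t)" for s t
    by (simp add: cochar_def tmul_def power_int_mult_distrib vec_eq_iff)
  show "\<exists>S c. finite S \<and> (\<forall>t. t \<noteq> 0 \<longrightarrow> cochar d t $ k = (\<Sum>m\<in>S. c m * t powi m))" for k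
    by (rule exI[of _ "{d k}"], rule exI[of _ "\<lambda>_. 1"]) (simp add: cochar_def)
qed

lemma norm_lmono_cochar:
  assumes t: "t \<noteq> 0"
  shows "norm (lmono (cochar d t) \<gamma>) = exp (of_int (pairing \<gamma> d) * ln (norm t))"
proof -
  have "ln (norm (cochar d t $ k)) = of_int (d k) * ln (norm t)" for k
  proof -
    have "norm (cochar d t $ k) = exp (ln (norm t)) powi d k"
      using t by (simp add: cochar_def norm_power_int)
    also have "\<dots> = exp (of_int (d k) * ln (norm t))" by (rule exp_power_int)
    finally show ?thesis by simp
  qed
  thus ?thesis
    unfolding norm_lmono_exp[OF cochar_torus[OF t]] pairing_def
    by (simp add: sum_distrib_right mult.assoc)
qed

lemma log_ratio_cochar_bound:
  assumes wV: "weight_controlled hV AV" and wW: "weight_controlled hW AW" and \<alpha>: "\<alpha> \<in> AV"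
    and sep: "\<And>\<beta>. \<beta> \<in> AW \<Longrightarrow> pairing \<alpha> d + 1 \<le> pairing \<beta> d"
  shows "\<exists>C. \<forall>t. t \<noteq> 0 \<and> norm t < 1 \<longrightarrow>
           ln (hW (cochar d t)) - ln (hV (cochar d t)) \<le> C + 2 * ln (norm t)"
proof -
  obtain DV where DV: "0 < DV"
    and lowV: "\<And>\<sigma>. \<sigma> \<in> torus \<Longrightarrow> (norm (lmono \<sigma> \<alpha>))\<^sup>2 \<le> DV * hV \<sigma>"
    using wV \<alpha> unfolding weight_controlled_def by blast
  obtain EW where EW: "0 < EW" and finW: "finite AW" and neW: "AW \<noteq> {}"
    and upW: "\<And>\<sigma>. \<sigma> \<in> torus \<Longrightarrow> hW \<sigma> \<le> EW * (\<Sum>\<beta>\<in>AW. (norm (lmono \<sigma> \<beta>))\<^sup>2)"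
    using wW unfolding weight_controlled_def by blast
  define a where "a = real_of_int (pairing \<alpha> d)"
  define EA where "EA = EW * card AW"
  have EA: "0 < EA" unfolding EA_def using EW finW neW by (simp add: card_gt_0_iff)
  have "ln (hW (cochar d t)) - ln (hV (cochar d t)) \<le> (ln EA + ln DV) + 2 * ln (norm t)"
    if t0: "t \<noteq> 0" and t1: "norm t < 1" for t
  proof -
    define l where "l = ln (norm t)"
    have l: "l < 0" unfolding l_def using t0 t1 by simp
    have \<tau>: "cochar d t \<in> torus" by (rule cochar_torus[OF t0])
    have "hW (cochar d t) \<le> EW * (\<Sum>\<beta>\<in>AW. (exp (of_int (pairing \<beta> d) * l))\<^sup>2)"
      using upW[OF \<tau>] by (simp add: norm_lmono_cochar[OF t0] l_def)
    also have "\<dots> \<le> EW * (\<Sum>\<beta>\<in>AW. (exp ((a + 1) * l))\<^sup>2)"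
    proof (intro mult_left_mono sum_mono power_mono)
      fix \<beta> assume "\<beta> \<in> AW"
      hence "a + 1 \<le> of_int (pairing \<beta> d)" using sep unfolding a_def by fastforce
      hence "of_int (pairing \<beta> d) * l \<le> (a + 1) * l" using l by (intro mult_right_mono_neg) auto
      thus "exp (of_int (pairing \<beta> d) * l) \<le> exp ((a + 1) * l)" by simp
    qed (use EW in auto)
    also have "\<dots> = EA * exp (2 * ((a + 1) * l))"
      unfolding EA_def by (simp add: exp_double[symmetric] mult.commute)
    finally have "ln (hW (cochar d t)) \<le> ln (EA * exp (2 * ((a + 1) * l)))"
      using weight_controlled_pos[OF wW \<tau>] by simp
    hence upper: "ln (hW (cochar d t)) \<le> ln EA + 2 * ((a + 1) * l)"
      using EA by (simp add: ln_mult)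
    have "exp (2 * (a * l)) \<le> DV * hV (cochar d t)"
      using lowV[OF \<tau>] by (simp add: norm_lmono_cochar[OF t0] a_def l_def exp_double[symmetric])
    hence "2 * (a * l) \<le> ln (DV * hV (cochar d t))"
      using DV weight_controlled_pos[OF wV \<tau>] by (simp add: ln_ge_iff)
    hence lower: "2 * (a * l) \<le> ln DV + ln (hV (cochar d t))"
      using DV weight_controlled_pos[OF wV \<tau>] by (simp add: ln_mult)
    from upper lower show ?thesis unfolding l_def by (simp add: algebra_simps)
  qed
  thus ?thesis by blast
qed

lemma filterlim_ln_norm_at_0: "filterlim (\<lambda>t::complex. ln (norm t)) at_bot (at 0)"
proof -
  have "filterlim (\<lambda>t::complex. norm t) (at_right 0) (at 0)"
    by (rule tendsto_imp_filterlim_at_right)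
       (auto intro!: tendsto_norm_zero simp: eventually_at_filter)
  thus ?thesis by (rule filterlim_compose[OF ln_at_0])
qed

lemma filterlim_at_bot_of_log_bound:
  fixes f :: "complex \<Rightarrow> real"
  assumes c: "0 < c" and bound: "\<And>t. t \<noteq> 0 \<Longrightarrow> norm t < 1 \<Longrightarrow> f t \<le> C + c * ln (norm t)"
  shows "filterlim f at_bot (at 0)"
  unfolding filterlim_at_bot
proof
  fix Z
  have "eventually (\<lambda>t. ln (norm t) \<le> (Z - C) / c) (at (0::complex))"
    using filterlim_ln_norm_at_0 unfolding filterlim_at_bot by blast
  moreover have "eventually (\<lambda>t. t \<noteq> 0 \<and> norm t < 1) (at (0::complex))"
    unfolding eventually_at by (intro exI[of _ 1]) auto
  ultimately show "eventually (\<lambda>t. f t \<le> Z) (at 0)"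
  proof eventually_elim
    case (elim t)
    then have "c * ln (norm t) \<le> Z - C" using c by (simp add: field_simps)
    with bound[of t] elim show ?case by simp
  qed
qed

lemma sequence_of_1ps:
  assumes alg: "alg_1ps lam" and lim: "filterlim (\<lambda>t. f (lam t)) at_bot (at 0)"
  shows "\<exists>\<sigma>. (\<forall>j::nat. \<sigma> j \<in> torus) \<and> filterlim (\<lambda>j. f (\<sigma> j)) at_bot sequentially"
proof -
  define r where "r j = complex_of_real (inverse (real (Suc j)))" for j
  have r0: "r j \<noteq> 0" for j unfolding r_def by (simp del: of_nat_Suc)
  have "filterlim r (at 0) sequentially"
  proof (rule filterlim_atI)
    show "(r \<longlongrightarrow> 0) sequentially"
      unfolding r_def using tendsto_of_real[OF LIMSEQ_inverse_real_of_nat, where 'a=complex] by simp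
  qed (use r0 in simp)
  with lim have "filterlim (\<lambda>j. f (lam (r j))) at_bot sequentially"
    by (rule filterlim_compose)
  moreover have "\<forall>j. lam (r j) \<in> torus" using alg r0 unfolding alg_1ps_def by blast
  ultimately show ?thesis by (intro exI[of _ "\<lambda>j. lam (r j)"]) simp
qed

lemma destabilizing_sequence_iff_1ps:
  assumes wV: "weight_controlled hV AV" and wW: "weight_controlled hW AW"
  shows "(\<exists>\<sigma> :: nat \<Rightarrow> complex^'n. (\<forall>j. \<sigma> j \<in> torus) \<and>
            filterlim (\<lambda>j. ln (hW (\<sigma> j)) - ln (hV (\<sigma> j))) at_bot sequentially)
     \<longleftrightarrow> (\<exists>lam. alg_1ps lam \<and> filterlim (\<lambda>t. ln (hW (lam t)) - ln (hV (lam t))) at_bot (at 0))"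
proof
  assume "\<exists>\<sigma>. (\<forall>j. \<sigma> j \<in> torus) \<and> filterlim (\<lambda>j. ln (hW (\<sigma> j)) - ln (hV (\<sigma> j))) at_bot sequentially"
  then obtain \<sigma> \<alpha> where \<sigma>: "\<sigma> \<in> torus" and \<alpha>: "\<alpha> \<in> AV"
    and dom: "\<And>\<beta>. \<beta> \<in> AW \<Longrightarrow> norm (lmono \<sigma> \<beta>) < norm (lmono \<sigma> \<alpha>)"
    using dominating_weight[OF wV wW] by metis
  have "\<exists>d. \<forall>\<beta>\<in>AW. pairing \<alpha> d + 1 \<le> pairing \<beta> d"
  proof (rule integral_separating_direction)
    show "finite AW" using wW unfolding weight_controlled_def by blast
    fix \<beta> assume "\<beta> \<in> AW"
    from dom[OF this] show "(\<Sum>k\<in>UNIV. of_int (\<alpha> k) * - ln (norm (\<sigma> $ k)))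
        < (\<Sum>k\<in>UNIV. of_int (\<beta> k) * - ln (norm (\<sigma> $ k)))"
      unfolding norm_lmono_exp[OF \<sigma>] by (simp add: sum_negf)
  qed
  then obtain d where "\<And>\<beta>. \<beta> \<in> AW \<Longrightarrow> pairing \<alpha> d + 1 \<le> pairing \<beta> d" by blast
  then obtain C where "\<And>t. t \<noteq> 0 \<Longrightarrow> norm t < 1 \<Longrightarrow>
      ln (hW (cochar d t)) - ln (hV (cochar d t)) \<le> C + 2 * ln (norm t)"
    using log_ratio_cochar_bound[OF wV wW \<alpha>] by blast
  then have "filterlim (\<lambda>t. ln (hW (cochar d t)) - ln (hV (cochar d t))) at_bot (at 0)"
    by (intro filterlim_at_bot_of_log_bound[of 2]) auto
  with alg_1ps_cochar show "\<exists>lam. alg_1ps lam \<and>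
      filterlim (\<lambda>t. ln (hW (lam t)) - ln (hV (lam t))) at_bot (at 0)" by blast
next
  assume "\<exists>lam. alg_1ps lam \<and> filterlim (\<lambda>t. ln (hW (lam t)) - ln (hV (lam t))) at_bot (at 0)"
  then obtain lam where "alg_1ps lam"
    and "filterlim (\<lambda>t. ln (hW (lam t)) - ln (hV (lam t))) at_bot (at 0)" by blast
  then show "\<exists>\<sigma>. (\<forall>j. \<sigma> j \<in> torus) \<and>
      filterlim (\<lambda>j. ln (hW (\<sigma> j)) - ln (hV (\<sigma> j))) at_bot sequentially"
    using sequence_of_1ps[of lam "\<lambda>\<sigma>. ln (hW \<sigma>) - ln (hV \<sigma>)"] by blast
qed

text \<open>The theorem: p_{w,v} is the log-ratio of the normalized squared orbit norms of w and v,
  both of which are weight-controlled.\<close>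

theorem mainTheorem16:
  fixes \<rho>V :: "complex^'n \<Rightarrow> complex^'v^'v" and \<rho>W :: "complex^'n \<Rightarrow> complex^'w^'w"
    and HV :: "complex^'v^'v" and HW :: "complex^'w^'w"
    and v :: "complex^'v" and w :: "complex^'w"
  assumes "rational_rep \<rho>V" and "rational_rep \<rho>W"
    and "hermitian_pd HV" and "hermitian_pd HW"
    and "v \<noteq> 0" and "w \<noteq> 0"
  shows "(\<exists>\<sigma> :: nat \<Rightarrow> complex^'n. (\<forall>j. \<sigma> j \<in> torus) \<and>
            filterlim (\<lambda>j. pwv \<rho>W HW w \<rho>V HV v (\<sigma> j)) at_bot sequentially)
     \<longleftrightarrow> (\<exists>lam :: complex \<Rightarrow> complex^'n. alg_1ps lam \<and>
            filterlim (\<lambda>t. pwv \<rho>W HW w \<rho>V HV v (lam t)) at_bot (at 0))"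
proof -
  obtain AV where wV: "weight_controlled (\<lambda>\<sigma>. hnorm2 HV (\<rho>V \<sigma> *v v) / hnorm2 HV v) AV"
    using orbit_norm_weight_controlled[OF assms(1,3,5)] by blast
  obtain AW where wW: "weight_controlled (\<lambda>\<sigma>. hnorm2 HW (\<rho>W \<sigma> *v w) / hnorm2 HW w) AW"
    using orbit_norm_weight_controlled[OF assms(2,4,6)] by blast
  have "pwv \<rho>W HW w \<rho>V HV v = (\<lambda>\<sigma>. ln (hnorm2 HW (\<rho>W \<sigma> *v w) / hnorm2 HW w)
                                  - ln (hnorm2 HV (\<rho>V \<sigma> *v v) / hnorm2 HV v))"
    by (simp add: fun_eq_iff pwv_def)
  then show ?thesis using destabilizing_sequence_iff_1ps[OF wV wW] by simp
qed

end
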